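(* For every sketch $Q$ with $d$ parameter holes, every $v\in\mathbb{R}^d$, every $u\in\mathbb{R}^d_{>0}$, every trajectory $z$ of length $n$, and all indices $0\le i\le j\le n$, the $(i,j)$ entry of $[\![Q]\!]^M_{v,u}(z)$ equals $[\![Q]\!]^q_{v,u}(z_{i:j})$. In particular, $[\![Q]\!]^q_{v,u}(z)$ equals the $(0,n)$ entry of $[\![Q]\!]^M_{v,u}(z)$.
   Context: Fix a set $\mathcal{X}$ of states. A trajectory is a finite sequence $z=(x_0,\dots,x_{n-1})\in\mathcal{X}^*$ of length $n$; for $0\le i\le j\le n$, $z_{i:j}=(x_i,\dots,x_{j-1})$ (empty if $i=j$). Fix predicates of two kinds: a non-parametric predicate $\varphi$ has $\mathsf{sat}_\varphi:\mathcal{X}^*\to\{0,1\}$; a parametric predicate $\varphi$ has a bounded scoring function $\iota_\varphi:\mathcal{X}^*\to\mathbb{R}$. Sketches are generated by $Q::=\varphi_{??i}\mid\varphi\mid Q\,;\,Q\mid Q^k\mid Q\wedge Q$, where $\varphi_{??i}$ is a parametric predicate with a parameter hole labelled $i\in\{1,\dots,d\}$, $\varphi$ in the second case is non-parametric, and $Q^k$ ($k\ge1$) is $k$-fold sequencing $Q\,;\cdots;\,Q$. Quantitative semantics (values in $\mathbb{R}\cup\{\pm\infty\}$), for $v\in\mathbb{R}^d$, $u\in\mathbb{R}^d_{>0}$ and a trajectory $w$ of length $m$: $[\![\varphi_{??i}]\!]^q_{v,u}(w)=(\iota_\varphi(w)-v_i)/u_i$; $[\![\varphi]\!]^q_{v,u}(w)=\infty$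 if $\mathsf{sat}_\varphi(w)=1$ and $-\infty$ otherwise; $[\![Q_1\wedge Q_2]\!]^q_{v,u}(w)=\min\{[\![Q_1]\!]^q_{v,u}(w),[\![Q_2]\!]^q_{v,u}(w)\}$; $[\![Q_1\,;\,Q_2]\!]^q_{v,u}(w)=\max_{0\le k\le m}\min\{[\![Q_1]\!]^q_{v,u}(w_{0:k}),[\![Q_2]\!]^q_{v,u}(w_{k:m})\}$. Matrix semantics: for $z$ of length $n$, $[\![Q]\!]^M_{v,u}(z)$ is an $(n+1)\times(n+1)$ matrix over $\mathbb{R}\cup\{\pm\infty\}$ indexed by $0,\dots,n$: for $Q=\varphi_{??i}$ the $(i',j')$ entry is $(\iota_\varphi(z_{i':j'})-v_i)/u_i$ if $i'\le j'$ and $-\infty$ if $i'>j'$; for non-parametric $Q=\varphi$ the $(i',j')$ entry is $[\![\varphi]\!]^q_{v,u}(z_{i':j'})$ if $i'\le j'$ and $-\infty$ otherwise; $[\![Q_1\wedge Q_2]\!]^M_{v,u}(z)$ is the entrywise minimum of the two matrices; $[\![Q_1\,;\,Q_2]\!]^M_{v,u}(z)=A\cdot B$ with $A=[\![Q_1]\!]^M_{v,u}(z)$, $B=[\![Q_2]\!]^M_{v,u}(z)$ and $(A\cdot B)_{i',j'}=\max_{0\le k\le n}\min\{A_{i',k},B_{k,j'}\}$. *)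

theory Defs
  imports "HOL-Library.Extended_Real"
begin

definition slice :: "'x list \<Rightarrow> nat \<Rightarrow> nat \<Rightarrow> 'x list" where
  "slice z i j = take (j - i) (drop i z)"

text \<open>Sketches. A parametric predicate is given by its scoring function iota,
  a non-parametric one by its satisfaction function sat.
  Iter k Q stands for Q^k (k-fold sequencing, k \<ge> 1).\<close>
datatype 'x sketch =
    Hole "'x list \<Rightarrow> real" nat
  | Pred "'x list \<Rightarrow> bool"
  | Seq "'x sketch" "'x sketch"
  | Iter nat "'x sketch"
  | Conj "'x sketch" "'x sketch"

fun wf_sketch :: "nat \<Rightarrow> 'x sketch \<Rightarrow> bool" where
  "wf_sketch d (Hole iota i) = (1 \<le> i \<and> i \<le> d \<and> (\<exists>B. \<forall>w. \<bar>iota w\<bar> \<le> B))"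
| "wf_sketch d (Pred s) = True"
| "wf_sketch d (Seq Q1 Q2) = (wf_sketch d Q1 \<and> wf_sketch d Q2)"
| "wf_sketch d (Iter k Q) = (1 \<le> k \<and> wf_sketch d Q)"
| "wf_sketch d (Conj Q1 Q2) = (wf_sketch d Q1 \<and> wf_sketch d Q2)"

definition seq_q :: "('x list \<Rightarrow> ereal) \<Rightarrow> ('x list \<Rightarrow> ereal) \<Rightarrow> 'x list \<Rightarrow> ereal" where
  "seq_q f g w = Max ((\<lambda>k. min (f (slice w 0 k)) (g (slice w k (length w)))) ` {0..length w})"

fun iter_q :: "nat \<Rightarrow> ('x list \<Rightarrow> ereal) \<Rightarrow> 'x list \<Rightarrow> ereal" where
  "iter_q 0 f = f"
| "iter_q (Suc 0) f = f"
| "iter_q (Suc (Suc k)) f = seq_q f (iter_q (Suc k) f)"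

text \<open>Parameters v, u indexed by 1..d (as functions nat \<Rightarrow> real).\<close>
fun qsem :: "'x sketch \<Rightarrow> (nat \<Rightarrow> real) \<Rightarrow> (nat \<Rightarrow> real) \<Rightarrow> 'x list \<Rightarrow> ereal" where
  "qsem (Hole iota i) v u w = ereal ((iota w - v i) / u i)"
| "qsem (Pred s) v u w = (if s w then \<infinity> else -\<infinity>)"
| "qsem (Conj Q1 Q2) v u w = min (qsem Q1 v u w) (qsem Q2 v u w)"
| "qsem (Seq Q1 Q2) v u w = seq_q (qsem Q1 v u) (qsem Q2 v u) w"
| "qsem (Iter k Q) v u w = iter_q k (qsem Q v u) w"

text \<open>Matrices indexed by 0..n, represented as functions; product over k \<in> {0..n}.\<close>
type_synonym mat = "nat \<Rightarrow> nat \<Rightarrow> ereal"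

definition mat_mult :: "nat \<Rightarrow> mat \<Rightarrow> mat \<Rightarrow> mat" where
  "mat_mult n A B = (\<lambda>i j. Max ((\<lambda>k. min (A i k) (B k j)) ` {0..n}))"

fun iter_m :: "nat \<Rightarrow> nat \<Rightarrow> mat \<Rightarrow> mat" where
  "iter_m n 0 A = A"
| "iter_m n (Suc 0) A = A"
| "iter_m n (Suc (Suc k)) A = mat_mult n A (iter_m n (Suc k) A)"

fun msem :: "'x sketch \<Rightarrow> (nat \<Rightarrow> real) \<Rightarrow> (nat \<Rightarrow> real) \<Rightarrow> 'x list \<Rightarrow> mat" where
  "msem (Hole iota i) v u z = (\<lambda>i' j'. if i' \<le> j' then ereal ((iota (slice z i' j') - v i) / u i) else -\<infinity>)"
| "msem (Pred s) v u z = (\<lambda>i' j'. if i' \<le> j' then qsem (Pred s) v u (slice z i' j') else -\<infinity>)"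
| "msem (Conj Q1 Q2) v u z = (\<lambda>i' j'. min (msem Q1 v u z i' j') (msem Q2 v u z i' j'))"
| "msem (Seq Q1 Q2) v u z = mat_mult (length z) (msem Q1 v u z) (msem Q2 v u z)"
| "msem (Iter k Q) v u z = iter_m (length z) k (msem Q v u z)"

end

theory Submission
  imports Defs
begin

text \<open>Both semantics are maxima over split points. For a matrix whose entries below the diagonal
  are \<open>-\<infinity>\<close>, the split points \<open>k\<close> of a product entry \<open>(i, j)\<close> outside \<open>{i..j}\<close> contribute
  \<open>-\<infinity>\<close> and can be dropped; the remaining ones, shifted by \<open>i\<close>, are exactly the split points of
  the sequential composition on \<open>z\<^sub>i\<^sub>:\<^sub>j\<close>. Upper triangularity is itself preserved by products,
  so both properties follow together by induction on the sketch.\<close>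

definition upper_triangular :: "mat \<Rightarrow> bool" where
  "upper_triangular A \<longleftrightarrow> (\<forall>i j. j < i \<longrightarrow> A i j = -\<infinity>)"

definition represents_on_slices :: "'x list \<Rightarrow> mat \<Rightarrow> ('x list \<Rightarrow> ereal) \<Rightarrow> bool" where
  "represents_on_slices z A f \<longleftrightarrow> (\<forall>i j. i \<le> j \<and> j \<le> length z \<longrightarrow> A i j = f (slice z i j))"

lemma length_slice: "i \<le> j \<Longrightarrow> j \<le> length z \<Longrightarrow> length (slice z i j) = j - i"
  by (simp add: slice_def)

lemma slice_full [simp]: "slice z 0 (length z) = z"
  by (simp add: slice_def)

lemma slice_slice_prefix:
  "i \<le> j \<Longrightarrow> j \<le> length z \<Longrightarrow> k \<le> j - i \<Longrightarrow> slice (slice z i j) 0 k = slice z i (i + k)"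
  by (simp add: slice_def min_def)

lemma slice_slice_suffix:
  "i \<le> j \<Longrightarrow> j \<le> length z \<Longrightarrow> k \<le> j - i
    \<Longrightarrow> slice (slice z i j) k (length (slice z i j)) = slice z (i + k) j"
  by (simp add: slice_def min_def drop_take add.commute)

lemma seq_q_slice:
  assumes "i \<le> j" "j \<le> length z"
  shows "seq_q f g (slice z i j) = Max ((\<lambda>k. min (f (slice z i k)) (g (slice z k j))) ` {i..j})"
proof -
  have "{i..j} = (\<lambda>k. i + k) ` {0..j - i}"
    using assms(1) by (auto simp: image_iff intro!: exI[of _ "_ - i"])
  then have "(\<lambda>k. min (f (slice z i k)) (g (slice z k j))) ` {i..j}
      = (\<lambda>k. min (f (slice z i (i + k))) (g (slice z (i + k) j))) ` {0..j - i}"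
    by (simp only: image_image)
  also have "\<dots> = (\<lambda>k. min (f (slice (slice z i j) 0 k))
                        (g (slice (slice z i j) k (length (slice z i j))))) ` {0..j - i}"
    using assms by (intro image_cong) (auto simp: slice_slice_prefix slice_slice_suffix)
  finally show ?thesis
    using assms by (simp add: seq_q_def length_slice)
qed

lemma upper_triangular_mat_mult:
  assumes "upper_triangular A" "upper_triangular B"
  shows "upper_triangular (mat_mult n A B)"
  unfolding upper_triangular_def
proof (intro allI impI)
  fix i j :: nat
  assume "j < i"
  then have "min (A i k) (B k j) = -\<infinity>" for k
    using assms unfolding upper_triangular_def by (cases "k < i") auto
  then show "mat_mult n A B i j = -\<infinity>"
    by (simp add: mat_mult_def image_constant_conv)
qed

lemma mat_mult_upper_triangular_entry:
  assumes "upper_triangular A" "upper_triangular B" "i \<le> j" "j \<le> n"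
  shows "mat_mult n A B i j = Max ((\<lambda>k. min (A i k) (B k j)) ` {i..j})"
proof -
  let ?h = "\<lambda>k. min (A i k) (B k j)"
  have outside: "?h k = -\<infinity>" if "k \<notin> {i..j}" for k
    using that assms(1,2) unfolding upper_triangular_def by (auto simp: not_le)
  have "Max (?h ` {0..n}) \<le> Max (?h ` {i..j})"
  proof (rule Max.boundedI)
    fix a
    assume "a \<in> ?h ` {0..n}"
    then obtain k where "a = ?h k" by blast
    then show "a \<le> Max (?h ` {i..j})"
      using outside[of k] assms(3) by (cases "k \<in> {i..j}") auto
  qed auto
  moreover have "Max (?h ` {i..j}) \<le> Max (?h ` {0..n})"
    using assms(3,4) by (intro Max_mono) auto
  ultimately show ?thesis
    unfolding mat_mult_def by (rule antisym)
qed

lemma represents_on_slices_mat_mult: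
  assumes "upper_triangular A" "upper_triangular B"
    and "represents_on_slices z A f" "represents_on_slices z B g"
  shows "represents_on_slices z (mat_mult (length z) A B) (seq_q f g)"
  unfolding represents_on_slices_def
proof (intro allI impI, elim conjE)
  fix i j
  assume ij: "i \<le> j" and jz: "j \<le> length z"
  have "mat_mult (length z) A B i j = Max ((\<lambda>k. min (A i k) (B k j)) ` {i..j})"
    using assms(1,2) ij jz by (rule mat_mult_upper_triangular_entry)
  also have "\<dots> = Max ((\<lambda>k. min (f (slice z i k)) (g (slice z k j))) ` {i..j})"
    using assms(3,4) jz unfolding represents_on_slices_def
    by (intro arg_cong[where f = Max] image_cong) auto
  also have "\<dots> = seq_q f g (slice z i j)"
    using ij jz by (rule seq_q_slice[symmetric])
  finally show "mat_mult (length z) A B i j = seq_q f g (slice z i j)" .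
qed

lemma iter_m_upper_triangular_represents:
  assumes "upper_triangular A" "represents_on_slices z A f"
  shows "upper_triangular (iter_m (length z) k A)
    \<and> represents_on_slices z (iter_m (length z) k A) (iter_q k f)"
proof (induction k rule: induct_nat_012)
  case (ge2 k)
  then show ?case
    unfolding iter_m.simps iter_q.simps
    using assms upper_triangular_mat_mult represents_on_slices_mat_mult by blast
qed (use assms in simp_all)

lemma msem_upper_triangular_represents:
  "upper_triangular (msem Q v u z) \<and> represents_on_slices z (msem Q v u z) (qsem Q v u)"
proof (induction Q)
  case (Seq Q1 Q2)
  have "qsem (Seq Q1 Q2) v u = seq_q (qsem Q1 v u) (qsem Q2 v u)" by auto
  then show ?case
    unfolding msem.simps using Seq.IH upper_triangular_mat_mult represents_on_slices_mat_mult
    by metis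
next
  case (Iter k Q)
  have "qsem (Iter k Q) v u = iter_q k (qsem Q v u)" by auto
  then show ?case
    unfolding msem.simps using Iter.IH iter_m_upper_triangular_represents by metis
qed (auto simp: upper_triangular_def represents_on_slices_def)

theorem theorem4:
  fixes Q :: "'x sketch" and d :: nat and v u :: "nat \<Rightarrow> real" and z :: "'x list"
  assumes "wf_sketch d Q"
    and "\<forall>i\<in>{1..d}. u i > 0"
  shows "(\<forall>i j. i \<le> j \<and> j \<le> length z \<longrightarrow> msem Q v u z i j = qsem Q v u (slice z i j))
         \<and> qsem Q v u z = msem Q v u z 0 (length z)"
proof -
  have entries: "\<forall>i j. i \<le> j \<and> j \<le> length z \<longrightarrow> msem Q v u z i j = qsem Q v u (slice z i j)"
    using msem_upper_triangular_represents unfolding represents_on_slices_def by blast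
  then have "msem Q v u z 0 (length z) = qsem Q v u z"
    by (metis le0 order_refl slice_full)
  with entries show ?thesis by simp
qed

end
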